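(* Consider a stationary memoryless uncertain channel with single-symbol map $N$ as described in the context, and let $0\le\delta_1<m_{\mathscr{Y}}(V_N)$. Let $\bar X$ be a one-step transmitted UV with $[\![\bar X]\!]\subseteq\mathscr{X}$, $\bar Y$ its received UV, and $\bar\delta\ge0$ such that $\bar X\in\mathscr{F}_{\bar\delta}(1)$, $\bar\delta\le\delta_1/m_{\mathscr{Y}}([\![\bar Y]\!])$, and $$I_{\bar\delta/|[\![\bar X]\!]|}(\bar Y;\bar X)=\sup\Big\{I_{\tilde\delta/|[\![X(1)]\!]|}(Y(1);X(1)) : \tilde\delta\ge0,\ X(1)\in\mathscr{F}_{\tilde\delta}(1),\ \tilde\delta\le\delta_1/m_{\mathscr{Y}}([\![Y(1)]\!])\Big\}.$$ Suppose that (a) for every $x\in\mathscr{X}\setminus[\![\bar X]\!]$ there is $S\in[\![\bar Y|\bar X]\!]^*_{\bar\delta/|[\![\bar X]\!]|}$ with $N(x)\subseteq S$; (b) $\bar\delta(1+1/|[\![\bar X]\!]|)\le\delta_1/m_{\mathscr{Y}}([\![\bar Y]\!])$; and (c) for all $n>1$, $0\le\delta_n\le(\bar\delta\, m_{\mathscr{Y}}(V_N)/|[\![\bar X]\!]|)^n$. Then, under the product uncertainty assumption and the union bound assumption, $C_N(\{\delta_n\})^*=I_{\bar\delta/|[\![\bar X]\!]|}(\bar Y;\bar X)$.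
   Context: Uncertain variables (UVs): a UV is a map $U$ from a sample space $\Omega$ to a set; jointly considered UVs share $\Omega$. $[\![U]\!]=\{U(\omega)\}$; $[\![U|w]\!]=\{U(\omega):W(\omega)=w\}$, $[\![U|W]\!]=\{[\![U|w]\!]:w\in[\![W]\!]\}$. An uncertainty function on a set $\mathscr{U}$ is a map $m$ on subsets of $\mathscr{U}$ with $m(\emptyset)=0$, $0<m(S)<\infty$ for nonempty $S$, $\max\{m(S_1),m(S_2)\}\le m(S_1\cup S_2)$. Association: $\mathscr{A}(X;Y)=\{m_{\mathscr{X}}([\![X|y_1]\!]\cap[\![X|y_2]\!])/m_{\mathscr{X}}([\![X]\!]):y_1\ne y_2\in[\![Y]\!]\}\setminus\{0\}$, $\mathscr{A}(Y;X)=\{m_{\mathscr{Y}}([\![Y|x_1]\!]\cap[\![Y|x_2]\!])/m_{\mathscr{Y}}([\![Y]\!]):x_1\ne x_2\in[\![X]\!]\}\setminus\{0\}$; $\mathscr{A}\succ\delta$: all elements $>\delta$ (false for $\emptyset$); $\mathscr{A}\preceq\delta$: all elements $\le\delta$ (true for $\emptyset$); $(X,Y)\stackrel{d}{\leftrightarrow}(\delta_1,\delta_2)$ iff $\mathscr{A}(X;Y)\succ\delta_1,\mathscr{A}(Y;X)\succ\delta_2$; $(X,Y)\stackrel{a}{\leftrightarrow}(\delta_1,\delta_2)$ iff $\mathscr{A}(X;Y)\preceq\delta_1,\mathscr{A}(Y;X)\preceq\delta_2$. $\delta$-mutual information: for UVs $U$ (with uncertainty function $m_{\mathscr{U}}$)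 and $W$, $u,u'\in[\![U]\!]$ are $\delta$-connected via $[\![U|W]\!]$ if there are $w_1,\dots,w_N\in[\![W]\!]$ with $u\in[\![U|w_1]\!]$, $u'\in[\![U|w_N]\!]$, $m_{\mathscr{U}}([\![U|w_i]\!]\cap[\![U|w_{i-1}]\!])/m_{\mathscr{U}}([\![U]\!])>\delta$ for $1<i\le N$; a set is $\delta$-connected if all pairs of its points are. A $\delta$-overlap family $[\![U|W]\!]^*_\delta$ is a family of distinct subsets covering $[\![U]\!]$, of largest cardinality among covering families with (i) each member $\delta$-connected and containing some $[\![U|w]\!]$; (ii) distinct members $S_1,S_2$ satisfy $m_{\mathscr{U}}(S_1\cap S_2)\le\delta\,m_{\mathscr{U}}([\![U]\!])$; (iii) each $[\![U|w]\!]$ contained in some member. $I_\delta(U;W)=\log_2|[\![U|W]\!]^*_\delta|$ if such a family exists, else $0$. Stationary memoryless channel: $\mathscr{X}$ is a totally bounded normed metric space, $\mathscr{Y}$ an output set, $N:\mathscr{X}\to2^{\mathscr{Y}}$; for $x(1:n)\in\mathscr{X}^n$, $S_N(x(1:n))=N(x(1))\times\cdots\times N(x(n))$. $m_{\mathscr{Y}}$ (resp. $m_{\mathscr{X}}$) is an uncertainty function on each $\mathscr{Y}^n$ (resp. $\mathscr{X}^n$), with $m_{\mathscr{Y}}(\mathscr{Y}^n)=1$. $V_N=N(x^* )$ with $x^*$ minimizing $m_{\mathscr{Y}}(N(x))$; $V_N^n=V_N\times\cdots\times V_N$. A discrete $\mathcal{C}_n\subseteq\mathscr{X}^n$ is $(N,\delta_n)$-distinguishable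 (for $0\le\delta_n<m_{\mathscr{Y}}(V_N^n)$) if $m_{\mathscr{Y}}(S_N(x_1(1:n))\cap S_N(x_2(1:n)))/m_{\mathscr{Y}}(\mathscr{Y}^n)\le\delta_n/|\mathcal{C}_n|$ for all distinct codewords; $R_{\delta_n}=\sup\frac1n\log_2|\mathcal{C}_n|$ over such codebooks; $C_N(\{\delta_n\})^*=\sup_{n\ge1}R_{\delta_n}$. For a codebook $\mathcal{C}_n$, transmitted UV $X(1:n)$ and received UV $Y(1:n)$ satisfy $[\![X(1:n)]\!]=\mathcal{C}_n$, $[\![Y(1:n)]\!]=\bigcup_{x(1:n)\in\mathcal{C}_n}S_N(x(1:n))$, $[\![Y(1:n)|x(1:n)]\!]=\{y\in[\![Y(1:n)]\!]:y\in S_N(x(1:n))\}$, $[\![X(1:n)|y(1:n)]\!]=\{x\in[\![X(1:n)]\!]:y(1:n)\in S_N(x)\}$. $\mathscr{F}_\delta(n)$ is the set of transmitted UVs $X(1:n)$ with $[\![X(1:n)]\!]\subseteq\mathscr{X}^n$ such that $(X(1:n),Y(1:n))\stackrel{d}{\leftrightarrow}(0,\delta/|[\![X(1:n)]\!]|)$ or $(X(1:n),Y(1:n))\stackrel{a}{\leftrightarrow}(1,\delta/|[\![X(1:n)]\!]|)$. Product uncertainty assumption: $m_{\mathscr{Y}}(S_1\times\cdots\times S_n)=\prod_i m_{\mathscr{Y}}(S_i)$ for all $n$ and $S_i\subseteq\mathscr{Y}$. Union bound assumption: $m_{\mathscr{Y}}(S_1\cup S_2)\le m_{\mathscr{Y}}(S_1)+m_{\mathscr{Y}}(S_2)$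 for $S_1,S_2\subseteq\mathscr{Y}^n$. *)

theory Defs
  imports Complex_Main "HOL-Library.Extended_Real"
begin

definition uv_range :: "'w set \<Rightarrow> ('w \<Rightarrow> 'a) \<Rightarrow> 'a set" where
  "uv_range \<Omega> U = U ` \<Omega>"

definition uv_cond :: "'w set \<Rightarrow> ('w \<Rightarrow> 'a) \<Rightarrow> ('w \<Rightarrow> 'b) \<Rightarrow> 'b \<Rightarrow> 'a set" where
  "uv_cond \<Omega> U W w = U ` {\<omega> \<in> \<Omega>. W \<omega> = w}"

definition uv_condfam :: "'w set \<Rightarrow> ('w \<Rightarrow> 'a) \<Rightarrow> ('w \<Rightarrow> 'b) \<Rightarrow> 'a set set" where
  "uv_condfam \<Omega> U W = uv_cond \<Omega> U W ` uv_range \<Omega> W"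

definition uncertainty_fun :: "'a set \<Rightarrow> ('a set \<Rightarrow> real) \<Rightarrow> bool" where
  "uncertainty_fun UU m \<longleftrightarrow>
     m {} = 0 \<and> (\<forall>S. S \<subseteq> UU \<and> S \<noteq> {} \<longrightarrow> 0 < m S) \<and>
     (\<forall>S1 S2. S1 \<subseteq> UU \<longrightarrow> S2 \<subseteq> UU \<longrightarrow> max (m S1) (m S2) \<le> m (S1 \<union> S2))"

definition assoc :: "'w set \<Rightarrow> ('a set \<Rightarrow> real) \<Rightarrow> ('w \<Rightarrow> 'a) \<Rightarrow> ('w \<Rightarrow> 'b) \<Rightarrow> real set" where
  "assoc \<Omega> m U W =
     {m (uv_cond \<Omega> U W w1 \<inter> uv_cond \<Omega> U W w2) / m (uv_range \<Omega> U) | w1 w2.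
        w1 \<in> uv_range \<Omega> W \<and> w2 \<in> uv_range \<Omega> W \<and> w1 \<noteq> w2} - {0}"

definition set_succ :: "real set \<Rightarrow> real \<Rightarrow> bool" where
  "set_succ A \<delta> \<longleftrightarrow> A \<noteq> {} \<and> (\<forall>a\<in>A. a > \<delta>)"

definition set_preceq :: "real set \<Rightarrow> real \<Rightarrow> bool" where
  "set_preceq A \<delta> \<longleftrightarrow> (\<forall>a\<in>A. a \<le> \<delta>)"

definition d_assoc :: "'w set \<Rightarrow> ('x set \<Rightarrow> real) \<Rightarrow> ('y set \<Rightarrow> real) \<Rightarrow> ('w \<Rightarrow> 'x) \<Rightarrow> ('w \<Rightarrow> 'y)
    \<Rightarrow> real \<Rightarrow> real \<Rightarrow> bool" where
  "d_assoc \<Omega> mX mY X Y \<delta>1 \<delta>2 \<longleftrightarrow>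
     set_succ (assoc \<Omega> mX X Y) \<delta>1 \<and> set_succ (assoc \<Omega> mY Y X) \<delta>2"

definition a_assoc :: "'w set \<Rightarrow> ('x set \<Rightarrow> real) \<Rightarrow> ('y set \<Rightarrow> real) \<Rightarrow> ('w \<Rightarrow> 'x) \<Rightarrow> ('w \<Rightarrow> 'y)
    \<Rightarrow> real \<Rightarrow> real \<Rightarrow> bool" where
  "a_assoc \<Omega> mX mY X Y \<delta>1 \<delta>2 \<longleftrightarrow>
     set_preceq (assoc \<Omega> mX X Y) \<delta>1 \<and> set_preceq (assoc \<Omega> mY Y X) \<delta>2"

definition delta_conn_pts :: "'w set \<Rightarrow> ('a set \<Rightarrow> real) \<Rightarrow> ('w \<Rightarrow> 'a) \<Rightarrow> ('w \<Rightarrow> 'b) \<Rightarrow> real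
    \<Rightarrow> 'a \<Rightarrow> 'a \<Rightarrow> bool" where
  "delta_conn_pts \<Omega> m U W \<delta> u u' \<longleftrightarrow>
     (\<exists>ws. ws \<noteq> [] \<and> set ws \<subseteq> uv_range \<Omega> W \<and>
        u \<in> uv_cond \<Omega> U W (hd ws) \<and> u' \<in> uv_cond \<Omega> U W (last ws) \<and>
        (\<forall>i. 0 < i \<and> i < length ws \<longrightarrow>
           m (uv_cond \<Omega> U W (ws ! i) \<inter> uv_cond \<Omega> U W (ws ! (i - 1))) / m (uv_range \<Omega> U) > \<delta>))"

definition delta_conn_set :: "'w set \<Rightarrow> ('a set \<Rightarrow> real) \<Rightarrow> ('w \<Rightarrow> 'a) \<Rightarrow> ('w \<Rightarrow> 'b) \<Rightarrow> real
    \<Rightarrow> 'a set \<Rightarrow> bool" where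
  "delta_conn_set \<Omega> m U W \<delta> S \<longleftrightarrow> (\<forall>u\<in>S. \<forall>u'\<in>S. delta_conn_pts \<Omega> m U W \<delta> u u')"

definition overlap_valid :: "'w set \<Rightarrow> ('a set \<Rightarrow> real) \<Rightarrow> ('w \<Rightarrow> 'a) \<Rightarrow> ('w \<Rightarrow> 'b) \<Rightarrow> real
    \<Rightarrow> 'a set set \<Rightarrow> bool" where
  "overlap_valid \<Omega> m U W \<delta> F \<longleftrightarrow>
     (\<forall>S\<in>F. S \<subseteq> uv_range \<Omega> U) \<and> \<Union>F = uv_range \<Omega> U \<and>
     (\<forall>S\<in>F. delta_conn_set \<Omega> m U W \<delta> S \<and> (\<exists>w\<in>uv_range \<Omega> W. uv_cond \<Omega> U W w \<subseteq> S)) \<and>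
     (\<forall>S1\<in>F. \<forall>S2\<in>F. S1 \<noteq> S2 \<longrightarrow> m (S1 \<inter> S2) \<le> \<delta> * m (uv_range \<Omega> U)) \<and>
     (\<forall>w\<in>uv_range \<Omega> W. \<exists>S\<in>F. uv_cond \<Omega> U W w \<subseteq> S)"

text \<open>A delta-overlap family: valid, and of largest cardinality (every valid family injects into it).\<close>
definition overlap_family :: "'w set \<Rightarrow> ('a set \<Rightarrow> real) \<Rightarrow> ('w \<Rightarrow> 'a) \<Rightarrow> ('w \<Rightarrow> 'b) \<Rightarrow> real
    \<Rightarrow> 'a set set \<Rightarrow> bool" where
  "overlap_family \<Omega> m U W \<delta> F \<longleftrightarrow>
     overlap_valid \<Omega> m U W \<delta> F \<and>
     (\<forall>G. overlap_valid \<Omega> m U W \<delta> G \<longrightarrow> (\<exists>f. inj_on f G \<and> f ` G \<subseteq> F))"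

definition I_delta :: "'w set \<Rightarrow> ('a set \<Rightarrow> real) \<Rightarrow> ('w \<Rightarrow> 'a) \<Rightarrow> ('w \<Rightarrow> 'b) \<Rightarrow> real \<Rightarrow> ereal" where
  "I_delta \<Omega> m U W \<delta> =
     (if \<exists>F. overlap_family \<Omega> m U W \<delta> F then
        (let F = (SOME F. overlap_family \<Omega> m U W \<delta> F) in
           if finite F then ereal (log 2 (real (card F))) else \<infinity>)
      else 0)"

text \<open>Sequences of length n are lists of length n. One-symbol uncertainty via singleton lists.\<close>
definition seqs :: "nat \<Rightarrow> 'a set \<Rightarrow> 'a list set" where
  "seqs n A = {xs. length xs = n \<and> set xs \<subseteq> A}"

definition prod_set :: "nat \<Rightarrow> (nat \<Rightarrow> 'a set) \<Rightarrow> 'a list set" where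
  "prod_set n S = {ys. length ys = n \<and> (\<forall>i<n. ys ! i \<in> S i)}"

definition m1 :: "('a list set \<Rightarrow> real) \<Rightarrow> 'a set \<Rightarrow> real" where
  "m1 m S = m ((\<lambda>a. [a]) ` S)"

definition S_N :: "('x \<Rightarrow> 'y set) \<Rightarrow> 'x list \<Rightarrow> 'y list set" where
  "S_N N xs = prod_set (length xs) (\<lambda>i. N (xs ! i))"

definition distinguishable :: "'x set \<Rightarrow> ('x \<Rightarrow> 'y set) \<Rightarrow> ('y list set \<Rightarrow> real) \<Rightarrow> nat \<Rightarrow> real
    \<Rightarrow> 'x list set \<Rightarrow> bool" where
  "distinguishable XX N mY n \<delta>n C \<longleftrightarrow>
     finite C \<and> C \<noteq> {} \<and> C \<subseteq> seqs n XX \<and>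
     (\<forall>c1\<in>C. \<forall>c2\<in>C. c1 \<noteq> c2 \<longrightarrow>
        mY (S_N N c1 \<inter> S_N N c2) / mY (seqs n UNIV) \<le> \<delta>n / real (card C))"

definition rate :: "'x set \<Rightarrow> ('x \<Rightarrow> 'y set) \<Rightarrow> ('y list set \<Rightarrow> real) \<Rightarrow> nat \<Rightarrow> real \<Rightarrow> ereal" where
  "rate XX N mY n \<delta>n =
     (SUP C \<in> {C. distinguishable XX N mY n \<delta>n C}. ereal (log 2 (real (card C)) / real n))"

definition capacity_star :: "'x set \<Rightarrow> ('x \<Rightarrow> 'y set) \<Rightarrow> ('y list set \<Rightarrow> real) \<Rightarrow> (nat \<Rightarrow> real) \<Rightarrow> ereal" where
  "capacity_star XX N mY \<delta> = (SUP n \<in> {1..}. rate XX N mY n (\<delta> n))"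

definition channel_pair :: "'x set \<Rightarrow> ('x \<Rightarrow> 'y set) \<Rightarrow> 'w set \<Rightarrow> ('w \<Rightarrow> 'x) \<Rightarrow> ('w \<Rightarrow> 'y) \<Rightarrow> bool" where
  "channel_pair XX N \<Omega> X Y \<longleftrightarrow>
     finite (uv_range \<Omega> X) \<and> uv_range \<Omega> X \<noteq> {} \<and> uv_range \<Omega> X \<subseteq> XX \<and>
     uv_range \<Omega> Y = (\<Union>x\<in>uv_range \<Omega> X. N x) \<and>
     (\<forall>x\<in>uv_range \<Omega> X. uv_cond \<Omega> Y X x = {y \<in> uv_range \<Omega> Y. y \<in> N x}) \<and>
     (\<forall>y\<in>uv_range \<Omega> Y. uv_cond \<Omega> X Y y = {x \<in> uv_range \<Omega> X. y \<in> N x})"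

definition in_F1 :: "('x list set \<Rightarrow> real) \<Rightarrow> ('y list set \<Rightarrow> real) \<Rightarrow> 'w set \<Rightarrow> ('w \<Rightarrow> 'x) \<Rightarrow> ('w \<Rightarrow> 'y)
    \<Rightarrow> real \<Rightarrow> bool" where
  "in_F1 mX mY \<Omega> X Y \<delta> \<longleftrightarrow>
     d_assoc \<Omega> (m1 mX) (m1 mY) X Y 0 (\<delta> / real (card (uv_range \<Omega> X))) \<or>
     a_assoc \<Omega> (m1 mX) (m1 mY) X Y 1 (\<delta> / real (card (uv_range \<Omega> X)))"

text \<open>Canonical realisation of the transmitted/received UVs for a one-step codebook C:
  sample space = joint range, X = fst, Y = snd.\<close>
definition chan_sample :: "('x \<Rightarrow> 'y set) \<Rightarrow> 'x set \<Rightarrow> ('x \<times> 'y) set" where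
  "chan_sample N C = {(x, y). x \<in> C \<and> y \<in> N x}"

end

theory Submission
  imports Defs
begin

(*
  Let F be the optimal overlap family of (Yb; Xb), with K' = |F| clusters, and put
  theta = delta 1 / (K' + 1). Since distinct clusters overlap little while every N x is large,
  the output set N x of each input lies in exactly one cluster (using (a) outside the range of Xb).
  Optimality of F forces two inputs in the same cluster to overlap by more than theta: otherwise
  they, together with one representative of every other cluster, would form a one-step code of
  size K' + 1 whose delta-mutual information log2 (K' + 1) exceeds the optimum. By the product
  assumption, two length-n codewords whose letters share their clusters then overlap by more
  than theta^n >= delta n / |C|, so by pigeonhole a distinguishable code has at most K'^n
  codewords; conversely one representative per cluster is a distinguishable code of size K'.
*)

lemma m1_empty: "uncertainty_fun UU m \<Longrightarrow> m1 m {} = 0"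
  by (simp add: m1_def uncertainty_fun_def)

lemma m1_mono:
  assumes "uncertainty_fun (seqs 1 UU) m" "A \<subseteq> B" "B \<subseteq> UU"
  shows "m1 m A \<le> m1 m B"
proof -
  have "(\<lambda>a. [a]) ` A \<subseteq> seqs 1 UU" "(\<lambda>a. [a]) ` B \<subseteq> seqs 1 UU"
    using assms(2,3) by (auto simp: seqs_def)
  then have "max (m ((\<lambda>a. [a]) ` A)) (m ((\<lambda>a. [a]) ` B)) \<le> m ((\<lambda>a. [a]) ` A \<union> (\<lambda>a. [a]) ` B)"
    using assms(1) unfolding uncertainty_fun_def by blast
  moreover have "(\<lambda>a. [a]) ` A \<union> (\<lambda>a. [a]) ` B = (\<lambda>a. [a]) ` B"
    using image_mono[OF assms(2)] by (rule Un_absorb1)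
  ultimately show ?thesis
    unfolding m1_def by simp
qed

lemma m1_pos:
  assumes "uncertainty_fun (seqs 1 UU) m" "S \<noteq> {}" "S \<subseteq> UU"
  shows "0 < m1 m S"
proof -
  have "(\<lambda>a. [a]) ` S \<subseteq> seqs 1 UU" "(\<lambda>a. [a]) ` S \<noteq> {}"
    using assms(2,3) by (auto simp: seqs_def)
  then show ?thesis
    using assms(1) unfolding uncertainty_fun_def m1_def by blast
qed

lemma m1_Int_le_if_separated:
  assumes unc: "uncertainty_fun (seqs 1 UNIV) m"
    and sep: "pairwise (\<lambda>S T. m1 m (S \<inter> T) \<le> \<theta>) F"
    and "S \<in> F" "T \<in> F" "S \<noteq> T" "A \<subseteq> S" "B \<subseteq> T"
  shows "m1 m (A \<inter> B) \<le> \<theta>"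
proof -
  have "m1 m (A \<inter> B) \<le> m1 m (S \<inter> T)"
    using assms(6,7) by (intro m1_mono[OF unc]) auto
  also have "\<dots> \<le> \<theta>"
    using sep assms(3-5) by (rule pairwiseD)
  finally show ?thesis .
qed

lemma separated_member_unique:
  assumes unc: "uncertainty_fun (seqs 1 UNIV) m"
    and sep: "pairwise (\<lambda>S T. m1 m (S \<inter> T) \<le> \<theta>) F"
    and "\<theta> < m1 m A" "S \<in> F" "T \<in> F" "A \<subseteq> S" "A \<subseteq> T"
  shows "S = T"
proof (rule ccontr)
  assume "S \<noteq> T"
  then have "m1 m (A \<inter> A) \<le> \<theta>"
    using m1_Int_le_if_separated[OF unc sep] assms(4-) by blast
  then show False
    using assms(3) by simp
qed

lemma representatives_separated:
  assumes unc: "uncertainty_fun (seqs 1 UNIV) m"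
    and sep: "pairwise (\<lambda>S T. m1 m (S \<inter> T) \<le> \<theta>) F"
    and big: "\<forall>S\<in>F. \<theta> < m1 m (N (\<rho> S))"
    and rep: "\<forall>S\<in>F. N (\<rho> S) \<subseteq> S"
  shows "inj_on \<rho> F" "pairwise (\<lambda>a b. m1 m (N a \<inter> N b) \<le> \<theta>) (\<rho> ` F)"
proof -
  show "inj_on \<rho> F"
  proof (rule inj_onI)
    fix S T assume S: "S \<in> F" and T: "T \<in> F" and eq: "\<rho> S = \<rho> T"
    have "N (\<rho> S) \<subseteq> T"
      using rep T unfolding eq by blast
    moreover have "\<theta> < m1 m (N (\<rho> S))" "N (\<rho> S) \<subseteq> S"
      using big rep S by blast+
    ultimately show "S = T"
      using separated_member_unique[OF unc sep _ S T] by blast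
  qed
  show "pairwise (\<lambda>a b. m1 m (N a \<inter> N b) \<le> \<theta>) (\<rho> ` F)"
  proof (rule pairwise_imageI)
    fix S T assume "S \<in> F" "T \<in> F" "S \<noteq> T"
    then show "m1 m (N (\<rho> S) \<inter> N (\<rho> T)) \<le> \<theta>"
      using m1_Int_le_if_separated[OF unc sep] rep by blast
  qed
qed

lemma I_delta_eq_log_card:
  assumes fam: "overlap_family \<Omega> m U W \<delta> G" and "finite G"
  shows "I_delta \<Omega> m U W \<delta> = ereal (log 2 (card G))"
proof -
  define F where "F = (SOME F. overlap_family \<Omega> m U W \<delta> F)"
  have F: "overlap_family \<Omega> m U W \<delta> F"
    unfolding F_def using fam by (rule someI)
  obtain f where f: "inj_on f G" "f ` G \<subseteq> F"
    using F fam unfolding overlap_family_def by blast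
  obtain g where g: "inj_on g F" "g ` F \<subseteq> G"
    using F fam unfolding overlap_family_def by blast
  have "finite F"
    using inj_on_finite[OF g \<open>finite G\<close>] .
  then have "card F = card G"
    using card_inj_on_le[OF f] card_inj_on_le[OF g \<open>finite G\<close>] by simp
  then show ?thesis
    using fam \<open>finite F\<close> unfolding I_delta_def F_def[symmetric] by auto
qed

lemma uv_range_chan_sample_fst:
  assumes "\<forall>x\<in>C. N x \<noteq> {}"
  shows "uv_range (chan_sample N C) fst = C"
proof
  show "uv_range (chan_sample N C) fst \<subseteq> C"
    by (auto simp: uv_range_def chan_sample_def)
  show "C \<subseteq> uv_range (chan_sample N C) fst"
  proof
    fix x assume "x \<in> C"
    then obtain y where "y \<in> N x"
      using assms by blast
    with \<open>x \<in> C\<close> show "x \<in> uv_range (chan_sample N C) fst"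
      unfolding uv_range_def chan_sample_def by (intro image_eqI[of _ _ "(x, y)"]) auto
  qed
qed

lemma uv_range_chan_sample_snd: "uv_range (chan_sample N C) snd = (\<Union>x\<in>C. N x)"
  unfolding uv_range_def chan_sample_def by (auto intro!: image_eqI[of _ snd])

lemma uv_cond_chan_sample_snd: "x \<in> C \<Longrightarrow> uv_cond (chan_sample N C) snd fst x = N x"
  unfolding uv_cond_def chan_sample_def by (auto intro!: image_eqI[of _ snd])

lemma delta_conn_set_chan_sample:
  assumes "\<forall>x\<in>C. N x \<noteq> {}" "x \<in> C"
  shows "delta_conn_set (chan_sample N C) m snd fst d (N x)"
  unfolding delta_conn_set_def delta_conn_pts_def
  using assms by (intro ballI exI[of _ "[x]"])
    (simp add: uv_range_chan_sample_fst uv_cond_chan_sample_snd)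

lemma overlap_family_chan_sample:
  assumes unc: "uncertainty_fun (seqs 1 UNIV) mY"
    and ne: "\<forall>x\<in>C. N x \<noteq> {}"
    and big: "\<forall>x\<in>C. d * m1 mY (\<Union>x\<in>C. N x) < m1 mY (N x)"
    and sep: "pairwise (\<lambda>a b. m1 mY (N a \<inter> N b) \<le> d * m1 mY (\<Union>x\<in>C. N x)) C"
  shows "overlap_family (chan_sample N C) (m1 mY) snd fst d (N ` C)"
proof -
  let ?\<Omega> = "chan_sample N C"
  let ?\<theta> = "d * m1 mY (\<Union>x\<in>C. N x)"
  note ranges = uv_range_chan_sample_fst[OF ne] uv_range_chan_sample_snd
  note conds = uv_cond_chan_sample_snd[of _ C N]
  have "pairwise (\<lambda>S T. m1 mY (S \<inter> T) \<le> ?\<theta>) (N ` C)"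
    using sep by (intro pairwise_imageI) (auto dest: pairwiseD)
  then have valid: "overlap_valid ?\<Omega> (m1 mY) snd fst d (N ` C)"
    unfolding overlap_valid_def ranges pairwise_def
    using conds delta_conn_set_chan_sample[OF ne] by auto
  have "\<exists>f. inj_on f G \<and> f ` G \<subseteq> N ` C"
    if G: "overlap_valid ?\<Omega> (m1 mY) snd fst d G" for G
  proof -
    have sepG: "pairwise (\<lambda>S T. m1 mY (S \<inter> T) \<le> ?\<theta>) G"
      using G unfolding overlap_valid_def ranges pairwise_def by blast
    have "\<forall>S\<in>G. \<exists>x\<in>C. N x \<subseteq> S"
      using G conds unfolding overlap_valid_def ranges by metis
    then obtain h where h: "\<forall>S\<in>G. h S \<in> C \<and> N (h S) \<subseteq> S"
      by metis
    then have "inj_on (N \<circ> h) G"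
      using representatives_separated(1)[OF unc sepG, of "\<lambda>A. A" "N \<circ> h"] big by auto
    then show ?thesis
      using h by (intro exI[of _ "N \<circ> h"]) auto
  qed
  with valid show ?thesis
    unfolding overlap_family_def by blast
qed

lemma I_delta_chan_sample:
  assumes unc: "uncertainty_fun (seqs 1 UNIV) mY" and "finite C"
    and ne: "\<forall>x\<in>C. N x \<noteq> {}"
    and big: "\<forall>x\<in>C. d * m1 mY (\<Union>x\<in>C. N x) < m1 mY (N x)"
    and sep: "pairwise (\<lambda>a b. m1 mY (N a \<inter> N b) \<le> d * m1 mY (\<Union>x\<in>C. N x)) C"
  shows "I_delta (chan_sample N C) (m1 mY) snd fst d = ereal (log 2 (card C))"
proof -
  have "inj_on N C"
  proof (rule inj_onI, rule ccontr)
    fix a b assume "a \<in> C" "b \<in> C" "N a = N b" "a \<noteq> b"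
    then have "m1 mY (N a) \<le> d * m1 mY (\<Union>x\<in>C. N x)"
      using pairwiseD[OF sep] by fastforce
    then show False
      using big \<open>a \<in> C\<close> by fastforce
  qed
  then show ?thesis
    using I_delta_eq_log_card[OF overlap_family_chan_sample[OF unc ne big sep]] \<open>finite C\<close>
    by (simp add: card_image)
qed

lemma uv_cond_subset_uv_range: "uv_cond \<Omega> U W w \<subseteq> uv_range \<Omega> U"
  by (auto simp: uv_cond_def uv_range_def)

lemma assoc_memD:
  assumes "a \<in> assoc \<Omega> m U W"
  obtains w1 w2 where "w1 \<in> uv_range \<Omega> W" "w2 \<in> uv_range \<Omega> W" "w1 \<noteq> w2"
    "a = m (uv_cond \<Omega> U W w1 \<inter> uv_cond \<Omega> U W w2) / m (uv_range \<Omega> U)"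
  using assms unfolding assoc_def by blast

lemma assoc_le_one:
  assumes unc: "uncertainty_fun (seqs 1 UU) m"
    and "uv_range \<Omega> U \<noteq> {}" "uv_range \<Omega> U \<subseteq> UU"
  shows "set_preceq (assoc \<Omega> (m1 m) U W) 1"
  unfolding set_preceq_def
proof
  fix a assume "a \<in> assoc \<Omega> (m1 m) U W"
  then obtain w1 w2
    where a: "a = m1 m (uv_cond \<Omega> U W w1 \<inter> uv_cond \<Omega> U W w2) / m1 m (uv_range \<Omega> U)"
    by (rule assoc_memD)
  have "m1 m (uv_cond \<Omega> U W w1 \<inter> uv_cond \<Omega> U W w2) \<le> m1 m (uv_range \<Omega> U)"
    using uv_cond_subset_uv_range[of \<Omega> U W w1] assms(3) by (intro m1_mono[OF unc]) auto
  moreover have "0 < m1 m (uv_range \<Omega> U)"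
    using m1_pos[OF unc] assms(2,3) .
  ultimately show "a \<le> 1"
    unfolding a by simp
qed

lemma in_F1_chan_sample:
  assumes uncX: "uncertainty_fun (seqs 1 XX) mX" and uncY: "uncertainty_fun (seqs 1 UNIV) mY"
    and "C \<noteq> {}" "C \<subseteq> XX" and ne: "\<forall>x\<in>C. N x \<noteq> {}"
    and sep: "pairwise (\<lambda>a b. m1 mY (N a \<inter> N b) \<le> \<delta> / card C * m1 mY (\<Union>x\<in>C. N x)) C"
  shows "in_F1 mX mY (chan_sample N C) fst snd \<delta>"
proof -
  let ?\<Omega> = "chan_sample N C"
  note ranges = uv_range_chan_sample_fst[OF ne] uv_range_chan_sample_snd
  have pos: "0 < m1 mY (\<Union>x\<in>C. N x)"
    using \<open>C \<noteq> {}\<close> ne by (intro m1_pos[OF uncY]) auto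
  have "set_preceq (assoc ?\<Omega> (m1 mY) snd fst) (\<delta> / card C)"
    unfolding set_preceq_def
  proof
    fix a assume "a \<in> assoc ?\<Omega> (m1 mY) snd fst"
    then obtain w1 w2 where w: "w1 \<in> uv_range ?\<Omega> fst" "w2 \<in> uv_range ?\<Omega> fst" "w1 \<noteq> w2"
      and a: "a = m1 mY (uv_cond ?\<Omega> snd fst w1 \<inter> uv_cond ?\<Omega> snd fst w2) / m1 mY (uv_range ?\<Omega> snd)"
      by (rule assoc_memD)
    note w = w[unfolded ranges]
    have "m1 mY (N w1 \<inter> N w2) \<le> \<delta> / card C * m1 mY (\<Union>x\<in>C. N x)"
      using sep w by (rule pairwiseD)
    then show "a \<le> \<delta> / card C"
      unfolding a ranges uv_cond_chan_sample_snd[OF w(1)] uv_cond_chan_sample_snd[OF w(2)]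
      by (simp only: pos_divide_le_eq[OF pos])
  qed
  moreover have "set_preceq (assoc ?\<Omega> (m1 mX) fst snd) 1"
    using \<open>C \<noteq> {}\<close> \<open>C \<subseteq> XX\<close> by (intro assoc_le_one[OF uncX]) (simp_all add: ranges)
  ultimately show ?thesis
    unfolding in_F1_def a_assoc_def ranges by simp
qed

text \<open>The right-hand side of the optimality hypothesis on \<open>\<delta>b\<close>: a one-step input is represented by its
  codebook \<open>C\<close> through the canonical realisation \<^const>\<open>chan_sample\<close>.\<close>
definition I_delta_one_step_sup ::
    "'x set \<Rightarrow> ('x \<Rightarrow> 'y set) \<Rightarrow> ('x list set \<Rightarrow> real) \<Rightarrow> ('y list set \<Rightarrow> real) \<Rightarrow> real \<Rightarrow> ereal" where
  "I_delta_one_step_sup XX N mX mY \<delta>1 =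
     (SUP p \<in> {(C, \<delta>t). finite C \<and> C \<noteq> {} \<and> C \<subseteq> XX \<and> (\<forall>x\<in>C. N x \<noteq> {}) \<and>
                  \<delta>t \<ge> 0 \<and> in_F1 mX mY (chan_sample N C) fst snd \<delta>t \<and>
                  \<delta>t \<le> \<delta>1 / m1 mY (uv_range (chan_sample N C) snd)}.
        I_delta (chan_sample N (fst p)) (m1 mY) snd fst (snd p / real (card (fst p))))"

lemma log_card_le_I_delta_one_step_sup:
  assumes uncX: "uncertainty_fun (seqs 1 XX) mX" and uncY: "uncertainty_fun (seqs 1 UNIV) mY"
    and C: "finite C" "C \<noteq> {}" "C \<subseteq> XX" and "0 \<le> \<delta>1"
    and big: "\<forall>x\<in>C. \<delta>1 / card C < m1 mY (N x)"
    and sep: "pairwise (\<lambda>a b. m1 mY (N a \<inter> N b) \<le> \<delta>1 / card C) C"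
  shows "ereal (log 2 (card C)) \<le> I_delta_one_step_sup XX N mX mY \<delta>1"
proof -
  have ne: "\<forall>x\<in>C. N x \<noteq> {}"
  proof
    fix x assume "x \<in> C"
    have "0 \<le> \<delta>1 / card C" "\<delta>1 / card C < m1 mY (N x)"
      using \<open>0 \<le> \<delta>1\<close> big \<open>x \<in> C\<close> by simp_all
    then show "N x \<noteq> {}"
      using m1_empty[OF uncY] by auto
  qed
  define M where "M = m1 mY (\<Union>x\<in>C. N x)"
  have "0 < M"
    unfolding M_def using C(2) ne by (intro m1_pos[OF uncY]) auto
  define \<delta>t where "\<delta>t = \<delta>1 / M"
  have scaled: "\<delta>t / card C * M = \<delta>1 / card C"
    unfolding \<delta>t_def using \<open>0 < M\<close> by simp
  have F1: "in_F1 mX mY (chan_sample N C) fst snd \<delta>t"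
    using in_F1_chan_sample[OF uncX uncY C(2,3) ne, of \<delta>t] sep unfolding M_def[symmetric] scaled .
  have I: "I_delta (chan_sample N C) (m1 mY) snd fst (\<delta>t / card C) = ereal (log 2 (card C))"
    using I_delta_chan_sample[OF uncY C(1) ne, of "\<delta>t / card C"] big sep unfolding M_def[symmetric] scaled .
  have "(C, \<delta>t) \<in> {(C, \<delta>t). finite C \<and> C \<noteq> {} \<and> C \<subseteq> XX \<and> (\<forall>x\<in>C. N x \<noteq> {}) \<and>
                  \<delta>t \<ge> 0 \<and> in_F1 mX mY (chan_sample N C) fst snd \<delta>t \<and>
                  \<delta>t \<le> \<delta>1 / m1 mY (uv_range (chan_sample N C) snd)}"
    using C ne F1 \<open>0 \<le> \<delta>1\<close> \<open>0 < M\<close>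
    unfolding uv_range_chan_sample_snd \<delta>t_def by (simp add: M_def)
  then show ?thesis
    unfolding I_delta_one_step_sup_def by (rule SUP_upper2) (simp add: I)
qed

lemma codebook_from_cluster_pair:
  assumes unc: "uncertainty_fun (seqs 1 UNIV) mY" and "finite F"
    and sep: "pairwise (\<lambda>S T. m1 mY (S \<inter> T) \<le> \<theta>) F"
    and big: "\<forall>a\<in>XX. \<theta> < m1 mY (N a)"
    and rep: "\<forall>S\<in>F. \<exists>a\<in>XX. N a \<subseteq> S"
    and S0: "S0 \<in> F" and x: "x \<in> XX" "N x \<subseteq> S0" and x': "x' \<in> XX" "N x' \<subseteq> S0"
    and "x \<noteq> x'" and close: "m1 mY (N x \<inter> N x') \<le> \<theta>"
  obtains C where "finite C" "C \<subseteq> XX" "card C = card F + 1"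
    "pairwise (\<lambda>a b. m1 mY (N a \<inter> N b) \<le> \<theta>) C"
proof -
  obtain \<rho>0 where "\<forall>S\<in>F. \<rho>0 S \<in> XX \<and> N (\<rho>0 S) \<subseteq> S"
    using rep by metis
  define \<rho> where "\<rho> = \<rho>0(S0 := x)"
  have \<rho>: "\<forall>S\<in>F. \<rho> S \<in> XX \<and> N (\<rho> S) \<subseteq> S"
    unfolding \<rho>_def using \<open>\<forall>S\<in>F. \<rho>0 S \<in> XX \<and> N (\<rho>0 S) \<subseteq> S\<close> x by auto
  then have reps: "inj_on \<rho> F" "pairwise (\<lambda>a b. m1 mY (N a \<inter> N b) \<le> \<theta>) (\<rho> ` F)"
    using representatives_separated[OF unc sep, of N \<rho>] big by auto
  have "x' \<notin> \<rho> ` F"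
  proof
    assume "x' \<in> \<rho> ` F"
    then obtain S where S: "S \<in> F" "x' = \<rho> S"
      by blast
    then have "S = S0"
      using separated_member_unique[OF unc sep _ S(1) S0, of "N x'"] big x' \<rho> by auto
    then show False
      using S(2) \<open>x \<noteq> x'\<close> unfolding \<rho>_def by simp
  qed
  have "m1 mY (N x' \<inter> N b) \<le> \<theta>" if b: "b \<in> \<rho> ` F" for b
  proof -
    obtain S where S: "S \<in> F" "b = \<rho> S"
      using b by blast
    show ?thesis
    proof (cases "S = S0")
      case True
      then show ?thesis
        using close S(2) unfolding \<rho>_def by (simp add: Int_commute)
    next
      case False
      then show ?thesis
        using m1_Int_le_if_separated[OF unc sep S0 S(1)] x'(2) \<rho> S by auto
    qed
  qed
  then have "pairwise (\<lambda>a b. m1 mY (N a \<inter> N b) \<le> \<theta>) (insert x' (\<rho> ` F))"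
    unfolding pairwise_insert using reps(2) by (simp add: Int_commute)
  moreover have "card (insert x' (\<rho> ` F)) = card F + 1"
    using \<open>x' \<notin> \<rho> ` F\<close> \<open>finite F\<close> card_image[OF reps(1)] by simp
  ultimately show thesis
    using that[of "insert x' (\<rho> ` F)"] \<open>finite F\<close> x' \<rho> by blast
qed

lemma same_cluster_overlap_gt:
  assumes uncX: "uncertainty_fun (seqs 1 XX) mX" and uncY: "uncertainty_fun (seqs 1 UNIV) mY"
    and "finite F"
    and sep: "pairwise (\<lambda>S T. m1 mY (S \<inter> T) \<le> \<delta>1 / (real (card F) + 1)) F"
    and big: "\<forall>a\<in>XX. \<delta>1 < m1 mY (N a)" and "0 \<le> \<delta>1"
    and rep: "\<forall>S\<in>F. \<exists>a\<in>XX. N a \<subseteq> S"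
    and opt: "I_delta_one_step_sup XX N mX mY \<delta>1 \<le> ereal (log 2 (card F))"
    and S: "S \<in> F" and x: "x \<in> XX" "N x \<subseteq> S" and x': "x' \<in> XX" "N x' \<subseteq> S"
  shows "\<delta>1 / (real (card F) + 1) < m1 mY (N x \<inter> N x')"
proof (rule ccontr)
  define \<theta> where "\<theta> = \<delta>1 / (real (card F) + 1)"
  assume "\<not> \<delta>1 / (real (card F) + 1) < m1 mY (N x \<inter> N x')"
  then have close: "m1 mY (N x \<inter> N x') \<le> \<theta>"
    unfolding \<theta>_def by simp
  have "\<theta> \<le> \<delta>1"
    unfolding \<theta>_def using divide_left_mono[of 1 "real (card F) + 1" \<delta>1] \<open>0 \<le> \<delta>1\<close> by simp
  then have big\<theta>: "\<forall>a\<in>XX. \<theta> < m1 mY (N a)"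
    using big by fastforce
  then have "x \<noteq> x'"
    using close x by fastforce
  obtain C where C: "finite C" "C \<subseteq> XX" "card C = card F + 1"
    and sepC: "pairwise (\<lambda>a b. m1 mY (N a \<inter> N b) \<le> \<theta>) C"
    using codebook_from_cluster_pair[OF uncY \<open>finite F\<close> sep[folded \<theta>_def] big\<theta> rep S x x'
        \<open>x \<noteq> x'\<close> close] .
  have "\<delta>1 / card C = \<theta>" "C \<noteq> {}"
    unfolding \<theta>_def using C(3) by auto
  then have "ereal (log 2 (card C)) \<le> I_delta_one_step_sup XX N mX mY \<delta>1"
    using log_card_le_I_delta_one_step_sup[OF uncX uncY C(1) _ C(2) \<open>0 \<le> \<delta>1\<close>] big\<theta> C(2) sepC
    by auto
  also note opt
  finally have "log 2 (card F + 1) \<le> log 2 (card F)"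
    using C(3) by simp
  moreover have "0 < card F"
    using S \<open>finite F\<close> card_gt_0_iff by blast
  ultimately show False
    by simp
qed

lemma overlap_family_channel_pair:
  assumes unc: "uncertainty_fun (seqs 1 UNIV) mY"
    and chan: "channel_pair XX N \<Omega> X Y"
    and fam: "overlap_family \<Omega> (m1 mY) Y X d F"
    and big: "\<forall>x\<in>uv_range \<Omega> X. d * m1 mY (uv_range \<Omega> Y) < m1 mY (N x)"
  shows "pairwise (\<lambda>S T. m1 mY (S \<inter> T) \<le> d * m1 mY (uv_range \<Omega> Y)) F"
    and "\<forall>S\<in>F. \<exists>x\<in>uv_range \<Omega> X. N x \<subseteq> S"
    and "\<forall>x\<in>uv_range \<Omega> X. \<exists>S\<in>F. N x \<subseteq> S"
    and "F \<noteq> {}" "finite F" "card F \<le> card (uv_range \<Omega> X)"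
proof -
  let ?RX = "uv_range \<Omega> X"
  have RX: "finite ?RX" "?RX \<noteq> {}"
    using chan unfolding channel_pair_def by blast+
  have cond: "\<forall>x\<in>?RX. uv_cond \<Omega> Y X x = N x"
    using chan unfolding channel_pair_def by blast
  have valid: "overlap_valid \<Omega> (m1 mY) Y X d F"
    using fam unfolding overlap_family_def by blast
  show sep: "pairwise (\<lambda>S T. m1 mY (S \<inter> T) \<le> d * m1 mY (uv_range \<Omega> Y)) F"
    using valid unfolding overlap_valid_def pairwise_def by blast
  show rep: "\<forall>S\<in>F. \<exists>x\<in>?RX. N x \<subseteq> S"
    using valid cond unfolding overlap_valid_def by metis
  show cover: "\<forall>x\<in>?RX. \<exists>S\<in>F. N x \<subseteq> S"
    using valid cond unfolding overlap_valid_def by metis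
  show "F \<noteq> {}"
    using cover RX(2) by blast
  obtain \<rho> where \<rho>: "\<forall>S\<in>F. \<rho> S \<in> ?RX \<and> N (\<rho> S) \<subseteq> S"
    using rep by metis
  then have "inj_on \<rho> F"
    using representatives_separated(1)[OF unc sep, of N \<rho>] big by blast
  then show "finite F" "card F \<le> card ?RX"
    using \<rho> RX(1) inj_on_finite card_inj_on_le by (metis image_subsetI)+
qed

lemma overlap_family_clusters:
  assumes unc: "uncertainty_fun (seqs 1 UNIV) mY"
    and chan: "channel_pair XX N \<Omega> X Y"
    and fam: "overlap_family \<Omega> (m1 mY) Y X (\<delta>b / card (uv_range \<Omega> X)) F"
    and rest: "\<forall>x\<in>XX - uv_range \<Omega> X. \<exists>S\<in>F. N x \<subseteq> S"
    and scale: "\<delta>b * (1 + 1 / card (uv_range \<Omega> X)) \<le> \<delta>1 / m1 mY (uv_range \<Omega> Y)"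
    and V: "\<forall>x\<in>XX. V \<le> m1 mY (N x)" "\<delta>1 < V" and "0 \<le> \<delta>1" "0 \<le> \<delta>b"
  shows "finite F" "F \<noteq> {}"
    and "pairwise (\<lambda>S T. m1 mY (S \<inter> T) \<le> \<delta>1 / (real (card F) + 1)) F"
    and "\<forall>S\<in>F. \<exists>x\<in>XX. N x \<subseteq> S" "\<forall>x\<in>XX. \<exists>S\<in>F. N x \<subseteq> S"
    and "\<delta>b * V / card (uv_range \<Omega> X) \<le> \<delta>1 / (real (card F) + 1)"
proof -
  define K where "K = real (card (uv_range \<Omega> X))"
  define M where "M = m1 mY (uv_range \<Omega> Y)"
  have RX: "finite (uv_range \<Omega> X)" "uv_range \<Omega> X \<noteq> {}" "uv_range \<Omega> X \<subseteq> XX"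
    and RY: "uv_range \<Omega> Y = (\<Union>x\<in>uv_range \<Omega> X. N x)"
    using chan unfolding channel_pair_def by blast+
  then have "0 < K"
    unfolding K_def by (simp add: card_gt_0_iff)
  obtain x0 where "x0 \<in> uv_range \<Omega> X"
    using RX(2) by blast
  then have "V \<le> M"
    using V(1) RX(3) RY m1_mono[OF unc, of "N x0" "uv_range \<Omega> Y"] unfolding M_def by force
  then have "0 < M"
    using V(2) \<open>0 \<le> \<delta>1\<close> by linarith
  have overlap_bound: "\<delta>b / K * M \<le> \<delta>1 / (K + 1)"
    using scale \<open>0 < K\<close> \<open>0 < M\<close> unfolding K_def[symmetric] M_def[symmetric]
    by (simp add: field_simps)
  have "\<delta>1 / (K + 1) \<le> \<delta>1"
    using divide_left_mono[of 1 "K + 1" \<delta>1] \<open>0 \<le> \<delta>1\<close> \<open>0 < K\<close> by simp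
  then have "\<forall>x\<in>uv_range \<Omega> X. \<delta>b / K * M < m1 mY (N x)"
    using overlap_bound V RX(3) by fastforce
  note F = overlap_family_channel_pair[OF unc chan fam this[unfolded K_def M_def]]
  show "finite F" "F \<noteq> {}" "\<forall>S\<in>F. \<exists>x\<in>XX. N x \<subseteq> S" "\<forall>x\<in>XX. \<exists>S\<in>F. N x \<subseteq> S"
    using F(2-5) RX(3) rest by blast+
  have "\<delta>1 / (K + 1) \<le> \<delta>1 / (real (card F) + 1)"
    unfolding K_def using F(6) \<open>0 \<le> \<delta>1\<close> by (intro divide_left_mono) auto
  then have bound: "\<delta>b / K * M \<le> \<delta>1 / (real (card F) + 1)"
    using overlap_bound by linarith
  then show "pairwise (\<lambda>S T. m1 mY (S \<inter> T) \<le> \<delta>1 / (real (card F) + 1)) F"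
    using pairwise_mono[OF F(1)] unfolding K_def M_def by fastforce
  have "\<delta>b * V / K \<le> \<delta>b / K * M"
    using \<open>V \<le> M\<close> \<open>0 \<le> \<delta>b\<close> \<open>0 < K\<close> by (simp add: divide_right_mono mult_left_mono)
  then show "\<delta>b * V / card (uv_range \<Omega> X) \<le> \<delta>1 / (real (card F) + 1)"
    using bound unfolding K_def by linarith
qed

lemma finite_seqs: "finite A \<Longrightarrow> finite (seqs n A)"
  unfolding seqs_def using finite_lists_length_eq by (simp add: conj_commute)

lemma card_seqs: "finite A \<Longrightarrow> card (seqs n A) = card A ^ n"
  unfolding seqs_def using card_lists_length_eq by (simp add: conj_commute)

lemma S_N_Int:
  "length c1 = n \<Longrightarrow> length c2 = n \<Longrightarrow>
    S_N N c1 \<inter> S_N N c2 = prod_set n (\<lambda>i. N (c1 ! i) \<inter> N (c2 ! i))"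
  by (auto simp: S_N_def prod_set_def)

lemma card_distinguishable_le_power:
  assumes product: "\<And>S. mY (prod_set n S) = (\<Prod>i<n. m1 mY (S i))"
    and norm: "mY (seqs n UNIV) = 1" and "1 \<le> n"
    and \<sigma>: "\<sigma> ` XX \<subseteq> F" "finite F"
    and clustered: "\<And>x x'. x \<in> XX \<Longrightarrow> x' \<in> XX \<Longrightarrow> \<sigma> x = \<sigma> x' \<Longrightarrow> \<theta> < m1 mY (N x \<inter> N x')"
    and "0 \<le> \<theta>" "0 \<le> \<delta>n" and tol: "\<delta>n / (real (card F) ^ n + 1) \<le> \<theta> ^ n"
    and dist: "distinguishable XX N mY n \<delta>n C"
  shows "card C \<le> card F ^ n"
proof (rule ccontr)
  assume "\<not> card C \<le> card F ^ n"
  then have "card F ^ n + 1 \<le> card C"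
    by simp
  then have large: "real (card F) ^ n + 1 \<le> card C"
    by (metis of_nat_1 of_nat_add of_nat_le_iff of_nat_power)
  have C: "C \<subseteq> seqs n XX"
    and sepC: "\<forall>c1\<in>C. \<forall>c2\<in>C. c1 \<noteq> c2 \<longrightarrow>
      mY (S_N N c1 \<inter> S_N N c2) / mY (seqs n UNIV) \<le> \<delta>n / card C"
    using dist unfolding distinguishable_def by auto
  have "map \<sigma> ` C \<subseteq> seqs n F"
    using C \<sigma>(1) by (fastforce simp: seqs_def)
  then have "\<not> inj_on (map \<sigma>) C"
    using card_inj_on_le[OF _ _ finite_seqs[OF \<sigma>(2)]] card_seqs[OF \<sigma>(2)]
      \<open>\<not> card C \<le> card F ^ n\<close> by metis
  then obtain c1 c2 where c: "c1 \<in> C" "c2 \<in> C" "c1 \<noteq> c2" "map \<sigma> c1 = map \<sigma> c2"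
    unfolding inj_on_def by blast
  then have len: "length c1 = n" "length c2 = n" and set: "set c1 \<subseteq> XX" "set c2 \<subseteq> XX"
    using C by (auto simp: seqs_def)
  have close: "\<theta> < m1 mY (N (c1 ! i) \<inter> N (c2 ! i))" if "i < n" for i
  proof (rule clustered)
    show "c1 ! i \<in> XX" "c2 ! i \<in> XX"
      using set len that by (auto dest: nth_mem)
    show "\<sigma> (c1 ! i) = \<sigma> (c2 ! i)"
      using arg_cong[OF c(4), of "\<lambda>xs. xs ! i"] len that by simp
  qed
  have "\<theta> ^ n = (\<Prod>i<n. \<theta>)"
    by simp
  also have "\<dots> < (\<Prod>i<n. m1 mY (N (c1 ! i) \<inter> N (c2 ! i)))"
    using \<open>1 \<le> n\<close> \<open>0 \<le> \<theta>\<close> close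
    by (intro prod_mono_strict[of 0]) (auto intro: less_imp_le le_less_trans)
  also have "\<dots> = mY (S_N N c1 \<inter> S_N N c2) / mY (seqs n UNIV)"
    unfolding S_N_Int[OF len] product norm by simp
  also have "\<dots> \<le> \<delta>n / card C"
    using sepC c by blast
  also have "\<dots> \<le> \<delta>n / (real (card F) ^ n + 1)"
    using large \<open>0 \<le> \<delta>n\<close> zero_le_power[of "real (card F)" n]
    by (intro divide_left_mono mult_pos_pos) linarith+
  also have "\<dots> \<le> \<theta> ^ n"
    by (rule tol)
  finally show False
    by simp
qed

lemma rate_le_log:
  assumes "1 \<le> n" and card: "\<And>C. distinguishable XX N mY n \<delta>n C \<Longrightarrow> card C \<le> k ^ n"
  shows "rate XX N mY n \<delta>n \<le> ereal (log 2 k)"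
  unfolding rate_def
proof (rule SUP_least)
  fix C assume "C \<in> {C. distinguishable XX N mY n \<delta>n C}"
  then have "0 < card C" "card C \<le> k ^ n"
    using card by (auto simp: distinguishable_def card_gt_0_iff)
  then have "0 < k" "real (card C) \<le> real k ^ n"
    using \<open>1 \<le> n\<close> by (cases "k = 0", auto simp: power_0_left simp flip: of_nat_power)
  then have "log 2 (card C) \<le> log 2 (real k ^ n)"
    using \<open>0 < card C\<close> by simp
  also have "\<dots> = n * log 2 k"
    using \<open>0 < k\<close> by (simp add: log_nat_power)
  finally show "ereal (log 2 (card C) / n) \<le> ereal (log 2 k)"
    using \<open>1 \<le> n\<close> by (simp add: divide_le_eq mult.commute)
qed

lemma log_card_le_rate:
  "distinguishable XX N mY n \<delta>n C \<Longrightarrow> ereal (log 2 (card C) / n) \<le> rate XX N mY n \<delta>n"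
  unfolding rate_def by (intro SUP_upper) simp

lemma distinguishable_singletons:
  assumes product: "\<And>S. mY (prod_set 1 S) = (\<Prod>i<1. m1 mY (S i))"
    and norm: "mY (seqs 1 UNIV) = 1"
    and C: "finite C" "C \<noteq> {}" "C \<subseteq> XX"
    and sep: "pairwise (\<lambda>a b. m1 mY (N a \<inter> N b) \<le> \<delta>1 / card C) C"
  shows "distinguishable XX N mY 1 \<delta>1 ((\<lambda>c. [c]) ` C)"
proof -
  have card: "card ((\<lambda>c. [c]) ` C) = card C"
    by (rule card_image) (simp add: inj_on_def)
  have "mY (S_N N [a] \<inter> S_N N [b]) / mY (seqs 1 UNIV) = m1 mY (N a \<inter> N b)" for a b
    using S_N_Int[of "[a]" 1 "[b]" N] product norm by simp
  then show ?thesis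
    using C sep card unfolding distinguishable_def seqs_def pairwise_def by auto
qed

lemma capacity_star_eqI:
  assumes "\<And>n. 1 \<le> n \<Longrightarrow> rate XX N mY n (\<delta> n) \<le> L" "L \<le> rate XX N mY 1 (\<delta> 1)"
  shows "capacity_star XX N mY \<delta> = L"
  unfolding capacity_star_def
proof (rule antisym)
  show "(SUP n\<in>{1..}. rate XX N mY n (\<delta> n)) \<le> L"
    using assms(1) by (intro SUP_least) simp
  show "L \<le> (SUP n\<in>{1..}. rate XX N mY n (\<delta> n))"
    using assms(2) by (intro SUP_upper2[of 1]) simp_all
qed

lemma tolerance_le_power:
  fixes \<delta> :: "nat \<Rightarrow> real"
  assumes "0 \<le> \<delta> 1" "0 \<le> b" "b \<le> \<delta> 1 / (real k + 1)"
    and "\<forall>n>1. 0 \<le> \<delta> n \<and> \<delta> n \<le> b ^ n" and "1 \<le> n"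
  shows "0 \<le> \<delta> n \<and> \<delta> n / (real k ^ n + 1) \<le> (\<delta> 1 / (real k + 1)) ^ n"
proof (cases "n = 1")
  case True
  then show ?thesis
    using assms(1) by simp
next
  case False
  then have "0 \<le> \<delta> n" "\<delta> n \<le> b ^ n"
    using assms(4,5) by auto
  moreover have "\<delta> n / (real k ^ n + 1) \<le> \<delta> n"
  proof -
    have "0 < real k ^ n + 1"
      using zero_le_power[of "real k" n] by linarith
    then show ?thesis
      using divide_left_mono[of 1 "real k ^ n + 1" "\<delta> n"] \<open>0 \<le> \<delta> n\<close> by simp
  qed
  moreover have "b ^ n \<le> (\<delta> 1 / (real k + 1)) ^ n"
    using assms(3,2) by (rule power_mono)
  ultimately show ?thesis
    by linarith
qed

lemma capacity_star_eq_log_card_clusters: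
  assumes product: "\<forall>n\<ge>1. \<forall>S. mY (prod_set n S) = (\<Prod>i<n. m1 mY (S i))"
    and norm: "\<forall>n. mY (seqs n UNIV) = 1" and unc: "uncertainty_fun (seqs 1 UNIV) mY"
    and F: "finite F" "F \<noteq> {}" and \<sigma>: "\<sigma> ` XX \<subseteq> F"
    and rep: "\<forall>S\<in>F. \<exists>a\<in>XX. N a \<subseteq> S"
    and sep: "pairwise (\<lambda>S T. m1 mY (S \<inter> T) \<le> \<theta>) F"
    and clustered: "\<And>x x'. x \<in> XX \<Longrightarrow> x' \<in> XX \<Longrightarrow> \<sigma> x = \<sigma> x' \<Longrightarrow> \<theta> < m1 mY (N x \<inter> N x')"
    and "0 \<le> \<theta>" "\<theta> \<le> \<delta> 1 / card F"
    and tol: "\<And>n. 1 \<le> n \<Longrightarrow> 0 \<le> \<delta> n \<and> \<delta> n / (real (card F) ^ n + 1) \<le> \<theta> ^ n"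
  shows "capacity_star XX N mY \<delta> = ereal (log 2 (card F))"
proof (rule capacity_star_eqI)
  fix n :: nat assume "1 \<le> n"
  have prod_n: "mY (prod_set n S) = (\<Prod>i<n. m1 mY (S i))" for S
    using product \<open>1 \<le> n\<close> by blast
  show "rate XX N mY n (\<delta> n) \<le> ereal (log 2 (card F))"
  proof (rule rate_le_log[OF \<open>1 \<le> n\<close>])
    fix C assume "distinguishable XX N mY n (\<delta> n) C"
    with tol[OF \<open>1 \<le> n\<close>] show "card C \<le> card F ^ n"
      using card_distinguishable_le_power[where N = N, OF prod_n norm[rule_format] \<open>1 \<le> n\<close> \<sigma> F(1)
          clustered \<open>0 \<le> \<theta>\<close>] by blast
  qed
next
  obtain \<rho> where \<rho>: "\<forall>S\<in>F. \<rho> S \<in> XX \<and> N (\<rho> S) \<subseteq> S"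
    using rep by metis
  have "\<forall>S\<in>F. \<theta> < m1 mY (N (\<rho> S))"
  proof
    fix S assume "S \<in> F"
    then show "\<theta> < m1 mY (N (\<rho> S))"
      using clustered[of "\<rho> S" "\<rho> S"] \<rho> by simp
  qed
  with \<rho> have inj: "inj_on \<rho> F" and sepR: "pairwise (\<lambda>a b. m1 mY (N a \<inter> N b) \<le> \<theta>) (\<rho> ` F)"
    using representatives_separated[OF unc sep, of N \<rho>] by auto
  have card: "card (\<rho> ` F) = card F"
    using card_image[OF inj] .
  have "pairwise (\<lambda>a b. m1 mY (N a \<inter> N b) \<le> \<delta> 1 / card (\<rho> ` F)) (\<rho> ` F)"
    unfolding card using \<open>\<theta> \<le> \<delta> 1 / card F\<close>
    by (intro pairwise_mono[OF sepR _ order_refl]) linarith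
  moreover have "mY (prod_set 1 S) = (\<Prod>i<1. m1 mY (S i))" for S
    using product by blast
  moreover have "finite (\<rho> ` F)" "\<rho> ` F \<noteq> {}" "\<rho> ` F \<subseteq> XX"
    using F \<rho> by auto
  ultimately have "distinguishable XX N mY 1 (\<delta> 1) ((\<lambda>c. [c]) ` \<rho> ` F)"
    using distinguishable_singletons norm by metis
  then have "ereal (log 2 (card ((\<lambda>c. [c]) ` \<rho> ` F)) / 1) \<le> rate XX N mY 1 (\<delta> 1)"
    using log_card_le_rate by fastforce
  moreover have "card ((\<lambda>c. [c]) ` \<rho> ` F) = card F"
    using card by (simp add: card_image inj_on_def)
  ultimately show "ereal (log 2 (card F)) \<le> rate XX N mY 1 (\<delta> 1)"
    by simp
qed

theorem theorem12:
  fixes XX :: "'x::real_normed_vector set"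
    and N :: "'x \<Rightarrow> 'y set"
    and mX :: "'x list set \<Rightarrow> real"
    and mY :: "'y list set \<Rightarrow> real"
    and xstar :: 'x
    and \<delta> :: "nat \<Rightarrow> real"
    and \<delta>b :: real
    and \<Omega> :: "'w set"
    and Xb :: "'w \<Rightarrow> 'x"
    and Yb :: "'w \<Rightarrow> 'y"
  assumes tb: "totally_bounded XX"
    and mX_unc: "\<forall>n. uncertainty_fun (seqs n XX) mX"
    and mY_unc: "\<forall>n. uncertainty_fun (seqs n UNIV) mY"
    and mY_norm: "\<forall>n. mY (seqs n UNIV) = 1"
    and xstar: "xstar \<in> XX" "\<forall>x\<in>XX. m1 mY (N xstar) \<le> m1 mY (N x)"
    and delta1: "0 \<le> \<delta> 1" "\<delta> 1 < m1 mY (N xstar)"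
    and chan: "channel_pair XX N \<Omega> Xb Yb"
    and db_nonneg: "\<delta>b \<ge> 0"
    and db_F: "in_F1 mX mY \<Omega> Xb Yb \<delta>b"
    and db_le: "\<delta>b \<le> \<delta> 1 / m1 mY (uv_range \<Omega> Yb)"
    and opt: "I_delta \<Omega> (m1 mY) Yb Xb (\<delta>b / real (card (uv_range \<Omega> Xb))) =
      (SUP p \<in> {(C, \<delta>t). finite C \<and> C \<noteq> {} \<and> C \<subseteq> XX \<and> (\<forall>x\<in>C. N x \<noteq> {}) \<and>
                   \<delta>t \<ge> 0 \<and> in_F1 mX mY (chan_sample N C) fst snd \<delta>t \<and>
                   \<delta>t \<le> \<delta> 1 / m1 mY (uv_range (chan_sample N C) snd)}.
         I_delta (chan_sample N (fst p)) (m1 mY) snd fst (snd p / real (card (fst p))))"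
    and cond_a: "\<exists>F. overlap_family \<Omega> (m1 mY) Yb Xb (\<delta>b / real (card (uv_range \<Omega> Xb))) F \<and>
      (\<forall>x \<in> XX - uv_range \<Omega> Xb. \<exists>S\<in>F. N x \<subseteq> S)"
    and cond_b: "\<delta>b * (1 + 1 / real (card (uv_range \<Omega> Xb))) \<le> \<delta> 1 / m1 mY (uv_range \<Omega> Yb)"
    and cond_c: "\<forall>n>1. 0 \<le> \<delta> n \<and>
      \<delta> n \<le> (\<delta>b * m1 mY (N xstar) / real (card (uv_range \<Omega> Xb))) ^ n"
    and product: "\<forall>n\<ge>1. \<forall>S :: nat \<Rightarrow> 'y set. mY (prod_set n S) = (\<Prod>i<n. m1 mY (S i))"
    and union_bound: "\<forall>n. \<forall>S1 S2. S1 \<subseteq> seqs n UNIV \<longrightarrow> S2 \<subseteq> seqs n UNIV \<longrightarrow>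
      mY (S1 \<union> S2) \<le> mY S1 + mY S2"
  shows "capacity_star XX N mY \<delta> = I_delta \<Omega> (m1 mY) Yb Xb (\<delta>b / real (card (uv_range \<Omega> Xb)))"
proof -
  have uncX: "uncertainty_fun (seqs 1 XX) mX" and uncY: "uncertainty_fun (seqs 1 UNIV) mY"
    using mX_unc mY_unc by blast+
  obtain F where fam: "overlap_family \<Omega> (m1 mY) Yb Xb (\<delta>b / card (uv_range \<Omega> Xb)) F"
    and rest: "\<forall>x \<in> XX - uv_range \<Omega> Xb. \<exists>S\<in>F. N x \<subseteq> S"
    using cond_a by blast
  note F = overlap_family_clusters[OF uncY chan fam rest cond_b xstar(2) delta1(2,1) db_nonneg]
  define \<theta> where "\<theta> = \<delta> 1 / (real (card F) + 1)"
  have I: "I_delta \<Omega> (m1 mY) Yb Xb (\<delta>b / card (uv_range \<Omega> Xb)) = ereal (log 2 (card F))"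
    using I_delta_eq_log_card[OF fam F(1)] .
  have big: "\<forall>x\<in>XX. \<delta> 1 < m1 mY (N x)"
    using xstar(2) delta1(2) by fastforce
  obtain \<sigma> where \<sigma>: "\<forall>x\<in>XX. \<sigma> x \<in> F \<and> N x \<subseteq> \<sigma> x"
    using F(5) by metis
  have opt': "I_delta_one_step_sup XX N mX mY (\<delta> 1) \<le> ereal (log 2 (card F))"
    using opt I unfolding I_delta_one_step_sup_def by simp
  have clustered: "\<theta> < m1 mY (N x \<inter> N x')" if "x \<in> XX" "x' \<in> XX" "\<sigma> x = \<sigma> x'" for x x'
    using same_cluster_overlap_gt[OF uncX uncY F(1,3) big delta1(1) F(4) opt', of "\<sigma> x" x x']
      \<sigma> that unfolding \<theta>_def by auto
  have "0 \<le> \<delta>b * m1 mY (N xstar) / card (uv_range \<Omega> Xb)"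
    using db_nonneg delta1 by simp
  then have tol: "0 \<le> \<delta> n \<and> \<delta> n / (real (card F) ^ n + 1) \<le> \<theta> ^ n" if "1 \<le> n" for n
    using tolerance_le_power[OF delta1(1) _ F(6) cond_c that] unfolding \<theta>_def by blast
  have "0 < card F"
    using F(1,2) by (simp add: card_gt_0_iff)
  then have "\<sigma> ` XX \<subseteq> F" "0 \<le> \<theta>" "\<theta> \<le> \<delta> 1 / card F"
    unfolding \<theta>_def using \<sigma> delta1(1) by (auto intro!: divide_left_mono mult_pos_pos)
  then have "capacity_star XX N mY \<delta> = ereal (log 2 (card F))"
    using capacity_star_eq_log_card_clusters[where N = N, OF product mY_norm uncY F(1,2) _ F(4)
        F(3)[folded \<theta>_def] clustered _ _ tol] by blast
  then show ?thesis
    using I by simp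
qed

end
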